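(* Fix $m\ge 0$. Work with smooth functions $\psi(u_0,u_1,\dots,u_N)$ of finitely many variables on domains with $u_0>0$, and let $D=\sum_{k\ge 0}u_{k+1}\frac{\partial}{\partial u_k}$ be the total derivative (so that, along $u_k=q^{(k)}(x)$, $D$ acts as $\frac{d}{dx}$). Define operators $$E=\sum_j u_j\frac{\partial}{\partial u_j},\qquad \Lambda=\sum_j(-1)^{j+1}D^j\frac{\partial}{\partial u_j},\qquad L=\sum_j(-1)^jD^j\Big(u_0\frac{\partial}{\partial u_j}\,\cdot\Big).$$ Let $\phi=\phi(u_0,\dots,u_m)$ be smooth with $E\phi=\phi$, i.e. $\phi=\sum_{j=0}^m u_j\frac{\partial\phi}{\partial u_j}$, and let $$S=\Lambda\phi=\sum_{j=0}^m(-1)^{j+1}D^j\frac{\partial\phi}{\partial u_j},$$ a function of $(u_0,\dots,u_{2m})$. Then $$LS=\sum_{j=0}^{2m}(-1)^jD^j\Big(u_0\frac{\partial S}{\partial u_j}\Big)=0 .$$ *)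

theory Defs
  imports "HOL-Analysis.Analysis"
begin

text \<open>Jet variables: a point is u :: nat \<Rightarrow> real, with u k the coordinate u_k.
  Functions psi(u_0,...,u_N) are modelled as (nat \<Rightarrow> real) \<Rightarrow> real.\<close>

type_synonym jetfun = "(nat \<Rightarrow> real) \<Rightarrow> real"

definition pd :: "nat \<Rightarrow> jetfun \<Rightarrow> jetfun" where
  "pd j \<psi> = (\<lambda>u. deriv (\<lambda>t. \<psi> (u(j := t))) (u j))"

definition pds :: "nat list \<Rightarrow> jetfun \<Rightarrow> jetfun" where
  "pds js \<psi> = foldr pd js \<psi>"

definition smooth_on_jet :: "(nat \<Rightarrow> real) set \<Rightarrow> jetfun \<Rightarrow> bool" where
  "smooth_on_jet U \<psi> \<longleftrightarrow>
     (\<forall>js. continuous_on U (pds js \<psi>) \<and>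
        (\<forall>j. \<forall>u\<in>U. (\<lambda>t. pds js \<psi> (u(j := t))) differentiable (at (u j))))"

definition Dtot :: "jetfun \<Rightarrow> jetfun" where
  "Dtot \<psi> = (\<lambda>u. \<Sum>k. u (Suc k) * pd k \<psi> u)"

definition Eop :: "jetfun \<Rightarrow> jetfun" where
  "Eop \<psi> = (\<lambda>u. \<Sum>j. u j * pd j \<psi> u)"

definition Lambda_op :: "jetfun \<Rightarrow> jetfun" where
  "Lambda_op \<psi> = (\<lambda>u. \<Sum>j. (-1::real) ^ (j + 1) * (Dtot ^^ j) (pd j \<psi>) u)"

definition Lop :: "jetfun \<Rightarrow> jetfun" where
  "Lop \<psi> = (\<lambda>u. \<Sum>j. (-1::real) ^ j * (Dtot ^^ j) (\<lambda>v. v 0 * pd j \<psi> v) u)"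

end

theory Submission
  imports Defs
begin

(* By Euler's relation \<phi> = \<Sum>_j u_j \<partial>\<phi>/\<partial>u_j, and since u_j = D^j u_0, integration by parts
   turns \<phi> + u_0 S into a total derivative D R. The Euler operator
   EL = \<Sum>_j (-1)^j D^j \<partial>/\<partial>u_j annihilates total derivatives, gives EL \<phi> = -S, and by the
   product rule EL (u_0 S) = S + L S. Applying EL to \<phi> + u_0 S = D R therefore yields L S = 0.

   That EL annihilates total derivatives rests on the commutation rule
   \<partial>/\<partial>u_k \<circ> D = D \<circ> \<partial>/\<partial>u_k + \<partial>/\<partial>u_(k-1), hence on the symmetry of second partial
   derivatives, which is proved from the mean value theorem since smoothness is only given
   coordinatewise. *)

lemma continuous_on_fun_upd: "continuous_on UNIV (\<lambda>t::real. v(j := t))"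
proof (intro continuous_on_coordinatewise_then_product)
  show "continuous_on UNIV (\<lambda>t. (v(j := t)) i)" for i
    by (cases "i = j") (simp_all add: continuous_on_id)
qed

lemma continuous_on_fun_upd2: "continuous_on UNIV (\<lambda>p::real \<times> real. v(i := fst p, k := snd p))"
proof (intro continuous_on_coordinatewise_then_product)
  show "continuous_on UNIV (\<lambda>p. (v(i := fst p, k := snd p)) j)" for j
    by (cases "j = k"; cases "j = i") (auto intro: continuous_intros)
qed

lemma eventually_fun_upd_in_open:
  fixes s :: real
  assumes "open S" "v(j := s) \<in> S"
  shows "eventually (\<lambda>t. v(j := t) \<in> S) (nhds s)"
proof -
  have "open (UNIV \<inter> (\<lambda>t. v(j := t)) -` S)"
    by (rule continuous_open_preimage[OF continuous_on_fun_upd open_UNIV assms(1)])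
  then show ?thesis
    using eventually_nhds_in_open[of "(\<lambda>t. v(j := t)) -` S" s] assms(2) by simp
qed

lemma eventually_fun_upd2_in_open:
  fixes u :: "'a \<Rightarrow> real"
  assumes "open S" "u \<in> S"
  shows "eventually (\<lambda>p. u(i := fst p, k := snd p) \<in> S) (nhds (u i, u k))"
proof -
  have "open (UNIV \<inter> (\<lambda>p. u(i := fst p, k := snd p)) -` S)"
    by (rule continuous_open_preimage[OF continuous_on_fun_upd2 open_UNIV assms(1)])
  then show ?thesis
    using eventually_nhds_in_open[of "(\<lambda>p. u(i := fst p, k := snd p)) -` S" "(u i, u k)"] assms(2)
    by simp
qed

lemma eventually_nhds_square:
  fixes a b :: real
  assumes "eventually P (nhds (a, b))"
  obtains h where "0 < h" "\<And>s t. a \<le> s \<Longrightarrow> s \<le> a + h \<Longrightarrow> b \<le> t \<Longrightarrow> t \<le> b + h \<Longrightarrow> P (s, t)"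
proof -
  obtain Pa Pb where "eventually Pa (nhds a)" "eventually Pb (nhds b)"
    and P: "\<And>s t. Pa s \<Longrightarrow> Pb t \<Longrightarrow> P (s, t)"
    using assms unfolding nhds_prod eventually_prod_filter by blast
  then obtain da db where "0 < da" "\<And>s. dist s a < da \<Longrightarrow> Pa s"
    and "0 < db" "\<And>t. dist t b < db \<Longrightarrow> Pb t"
    unfolding eventually_nhds_metric by blast
  then show thesis
    by (intro that[of "min da db / 2"] P) (auto simp: dist_real_def)
qed

subsection \<open>Coordinatewise smooth functions\<close>

locale open_jet_domain =
  fixes U :: "(nat \<Rightarrow> real) set"
  assumes open_U: "open U"
begin

definition agree :: "jetfun \<Rightarrow> jetfun \<Rightarrow> bool" where
  "agree f g \<longleftrightarrow> (\<forall>u\<in>U. f u = g u)"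

lemma agree_refl [simp]: "agree f f"
  by (simp add: agree_def)

lemma agree_sym: "agree f g \<Longrightarrow> agree g f"
  by (simp add: agree_def)

lemma agree_trans [trans]: "agree f g \<Longrightarrow> agree g h \<Longrightarrow> agree f h"
  by (simp add: agree_def)

lemma agreeD: "agree f g \<Longrightarrow> u \<in> U \<Longrightarrow> f u = g u"
  by (simp add: agree_def)

lemma eventually_fun_upd_in_U: "u \<in> U \<Longrightarrow> eventually (\<lambda>t. u(j := t) \<in> U) (nhds (u j))"
  using eventually_fun_upd_in_open[OF open_U, of u j "u j"] by simp

lemma eventually_agree_on_line:
  "agree f g \<Longrightarrow> u \<in> U \<Longrightarrow> eventually (\<lambda>t. f (u(j := t)) = g (u(j := t))) (nhds (u j))"
  by (rule eventually_mono[OF eventually_fun_upd_in_U]) (auto simp: agree_def)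

lemma pd_cong:
  assumes "agree f g"
  shows "agree (pd j f) (pd j g)"
  unfolding agree_def pd_def
  using deriv_cong_ev[OF eventually_agree_on_line[OF assms] refl] by blast

lemma pds_cong: "agree f g \<Longrightarrow> agree (pds js f) (pds js g)"
  by (induction js) (auto simp: pds_def pd_cong)

lemma pds_snoc: "pds (js @ [k]) f = pds js (pd k f)"
  by (simp add: pds_def)

definition coord_differentiable :: "jetfun \<Rightarrow> bool" where
  "coord_differentiable f \<longleftrightarrow> (\<forall>j. \<forall>u\<in>U. (\<lambda>t. f (u(j := t))) differentiable (at (u j)))"

definition regular :: "jetfun \<Rightarrow> bool" where
  "regular f \<longleftrightarrow> continuous_on U f \<and> coord_differentiable f"

lemma smooth_on_jet_iff_regular_pds: "smooth_on_jet U f \<longleftrightarrow> (\<forall>js. regular (pds js f))"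
  by (simp add: smooth_on_jet_def regular_def coord_differentiable_def)

lemma has_field_derivative_coord:
  assumes "coord_differentiable f" "v(j := s) \<in> U"
  shows "((\<lambda>t. f (v(j := t))) has_field_derivative pd j f (v(j := s))) (at s)"
proof -
  have "(\<lambda>t. f ((v(j := s))(j := t))) differentiable (at ((v(j := s)) j))"
    using assms unfolding coord_differentiable_def by blast
  then show ?thesis
    unfolding pd_def by (simp add: DERIV_deriv_iff_real_differentiable[symmetric])
qed

lemma has_field_derivative_coord_at:
  "coord_differentiable f \<Longrightarrow> u \<in> U \<Longrightarrow> ((\<lambda>t. f (u(j := t))) has_field_derivative pd j f u) (at (u j))"
  using has_field_derivative_coord[of f u j "u j"] by simp

lemma coord_differentiableI:
  assumes "\<And>j u. u \<in> U \<Longrightarrow> ((\<lambda>t. f (u(j := t))) has_field_derivative F j u) (at (u j))"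
  shows "coord_differentiable f"
  unfolding coord_differentiable_def real_differentiable_def using assms by blast

lemma pd_agreeI:
  assumes "\<And>u. u \<in> U \<Longrightarrow> ((\<lambda>t. f (u(k := t))) has_field_derivative F u) (at (u k))"
  shows "agree (pd k f) F"
  unfolding agree_def pd_def using assms DERIV_imp_deriv by blast

lemma coord_differentiable_cong:
  assumes "agree f g" "coord_differentiable f"
  shows "coord_differentiable g"
proof (rule coord_differentiableI)
  fix j u assume u: "u \<in> U"
  show "((\<lambda>t. g (u(j := t))) has_field_derivative pd j f u) (at (u j))"
    using DERIV_cong_ev[OF refl eventually_agree_on_line[OF assms(1) u] refl]
      has_field_derivative_coord_at[OF assms(2) u] by blast
qed

lemma regular_cong: "agree f g \<Longrightarrow> regular f \<Longrightarrow> regular g"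
  unfolding regular_def
  using continuous_on_cong[of U U f g] coord_differentiable_cong by (auto simp: agree_def)

lemma smooth_on_jet_cong: "agree f g \<Longrightarrow> smooth_on_jet U f \<Longrightarrow> smooth_on_jet U g"
  unfolding smooth_on_jet_iff_regular_pds by (blast intro: regular_cong pds_cong)

lemma smooth_on_jet_pd: "smooth_on_jet U f \<Longrightarrow> smooth_on_jet U (pd k f)"
  unfolding smooth_on_jet_iff_regular_pds by (simp add: pds_snoc[symmetric])

lemma smooth_on_jet_regular: "smooth_on_jet U f \<Longrightarrow> regular f"
  unfolding smooth_on_jet_iff_regular_pds by (drule spec[of _ "[]"]) (simp add: pds_def)

lemma smooth_on_jet_continuous: "smooth_on_jet U f \<Longrightarrow> continuous_on U f"
  using smooth_on_jet_regular regular_def by blast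

lemma smooth_on_jet_coord_differentiable: "smooth_on_jet U f \<Longrightarrow> coord_differentiable f"
  using smooth_on_jet_regular regular_def by blast

text \<open>Smoothness is a coinductive property: a class of regular functions that is closed, up to
  agreement on U, under partial derivatives consists of smooth functions.\<close>

lemma smooth_on_jet_coinduct:
  assumes regular: "\<And>f. f \<in> P \<Longrightarrow> regular f"
    and closed: "\<And>f k. f \<in> P \<Longrightarrow> \<exists>g\<in>P. agree (pd k f) g"
    and "f \<in> P"
  shows "smooth_on_jet U f"
proof -
  have "\<forall>f\<in>P. regular (pds js f)" for js
  proof (induction js rule: rev_induct)
    case Nil
    then show ?case using regular by (simp add: pds_def)
  next
    case (snoc k js)
    show ?case
    proof
      fix f assume "f \<in> P"
      then obtain g where "g \<in> P" "agree (pd k f) g" using closed by blast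
      then show "regular (pds (js @ [k]) f)"
        unfolding pds_snoc using snoc regular_cong pds_cong agree_sym by blast
    qed
  qed
  then show ?thesis using assms(3) smooth_on_jet_iff_regular_pds by blast
qed

lemma pd_const [simp]: "pd k (\<lambda>v. c) = (\<lambda>v. 0)"
  unfolding pd_def by (simp add: DERIV_imp_deriv)

lemma pd_coord: "pd k (\<lambda>v. v i) = (\<lambda>v. if k = i then 1 else 0)"
  unfolding pd_def by (rule ext) (auto intro: DERIV_imp_deriv)

lemma coord_differentiable_const: "coord_differentiable (\<lambda>v. c)"
  by (rule coord_differentiableI[where F = "\<lambda>j u. 0"]) simp

lemma coord_differentiable_coord: "coord_differentiable (\<lambda>v. v i)"
  by (rule coord_differentiableI[where F = "\<lambda>j u. if j = i then 1 else 0"]) simp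

lemma coord_differentiable_add:
  "coord_differentiable f \<Longrightarrow> coord_differentiable g \<Longrightarrow> coord_differentiable (\<lambda>v. f v + g v)"
  by (rule coord_differentiableI[where F = "\<lambda>j u. pd j f u + pd j g u"])
    (intro DERIV_add has_field_derivative_coord_at)

lemma pd_mult_at:
  assumes "coord_differentiable f" "coord_differentiable g" "u \<in> U"
  shows "((\<lambda>t. f (u(k := t)) * g (u(k := t))) has_field_derivative pd k f u * g u + f u * pd k g u)
           (at (u k))"
  using DERIV_mult[OF has_field_derivative_coord_at has_field_derivative_coord_at, OF assms(1,3) assms(2,3)]
  by (simp add: mult.commute)

lemma coord_differentiable_mult:
  "coord_differentiable f \<Longrightarrow> coord_differentiable g \<Longrightarrow> coord_differentiable (\<lambda>v. f v * g v)"
  by (rule coord_differentiableI) (rule pd_mult_at)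

lemma pd_add:
  "coord_differentiable f \<Longrightarrow> coord_differentiable g \<Longrightarrow>
     agree (pd k (\<lambda>v. f v + g v)) (\<lambda>v. pd k f v + pd k g v)"
  by (rule pd_agreeI) (intro DERIV_add has_field_derivative_coord_at)

lemma pd_mult:
  "coord_differentiable f \<Longrightarrow> coord_differentiable g \<Longrightarrow>
     agree (pd k (\<lambda>v. f v * g v)) (\<lambda>v. pd k f v * g v + f v * pd k g v)"
  by (rule pd_agreeI) (rule pd_mult_at)

lemma pd_sum:
  "(\<And>i. i \<in> A \<Longrightarrow> coord_differentiable (F i)) \<Longrightarrow>
     agree (pd k (\<lambda>v. \<Sum>i\<in>A. F i v)) (\<lambda>v. \<Sum>i\<in>A. pd k (F i) v)"
  by (rule pd_agreeI) (intro DERIV_sum has_field_derivative_coord_at)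

inductive_set smooth_algebra :: "jetfun set" where
  smooth: "smooth_on_jet U f \<Longrightarrow> f \<in> smooth_algebra"
| const: "(\<lambda>v. c) \<in> smooth_algebra"
| coord: "(\<lambda>v. v i) \<in> smooth_algebra"
| add: "f \<in> smooth_algebra \<Longrightarrow> g \<in> smooth_algebra \<Longrightarrow> (\<lambda>v. f v + g v) \<in> smooth_algebra"
| mult: "f \<in> smooth_algebra \<Longrightarrow> g \<in> smooth_algebra \<Longrightarrow> (\<lambda>v. f v * g v) \<in> smooth_algebra"

lemma smooth_algebra_regular: "f \<in> smooth_algebra \<Longrightarrow> regular f"
proof (induction rule: smooth_algebra.induct)
  case (smooth f)
  then show ?case by (rule smooth_on_jet_regular)
next
  case (const c)
  then show ?case by (simp add: regular_def coord_differentiable_const)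
next
  case (coord i)
  have "continuous_on U (\<lambda>v. v i)"
    by (rule continuous_on_subset[OF continuous_on_product_coordinates]) simp
  then show ?case by (simp add: regular_def coord_differentiable_coord)
next
  case (add f g)
  then show ?case by (simp add: regular_def continuous_on_add coord_differentiable_add)
next
  case (mult f g)
  then show ?case by (simp add: regular_def continuous_on_mult coord_differentiable_mult)
qed

lemma smooth_algebra_coord_differentiable: "f \<in> smooth_algebra \<Longrightarrow> coord_differentiable f"
  using smooth_algebra_regular regular_def by blast

lemma smooth_algebra_pd: "f \<in> smooth_algebra \<Longrightarrow> \<exists>g\<in>smooth_algebra. agree (pd k f) g"
proof (induction rule: smooth_algebra.induct)
  case (smooth f)
  then show ?case using smooth_algebra.smooth smooth_on_jet_pd agree_refl by blast
next
  case (const c)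
  show ?case unfolding pd_const by (rule bexI[OF agree_refl smooth_algebra.const])
next
  case (coord i)
  show ?case unfolding pd_coord by (rule bexI[OF agree_refl smooth_algebra.const])
next
  case (add f g)
  then obtain f' g' where "f' \<in> smooth_algebra" "agree (pd k f) f'"
    "g' \<in> smooth_algebra" "agree (pd k g) g'" by blast
  moreover have "agree (pd k (\<lambda>v. f v + g v)) (\<lambda>v. pd k f v + pd k g v)"
    using add.hyps by (intro pd_add smooth_algebra_coord_differentiable)
  ultimately have "agree (pd k (\<lambda>v. f v + g v)) (\<lambda>v. f' v + g' v)"
    by (simp add: agree_def)
  then show ?case using smooth_algebra.add[OF \<open>f' \<in> smooth_algebra\<close> \<open>g' \<in> smooth_algebra\<close>] by blast
next
  case (mult f g)
  then obtain f' g' where "f' \<in> smooth_algebra" "agree (pd k f) f'"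
    "g' \<in> smooth_algebra" "agree (pd k g) g'" by blast
  moreover have "agree (pd k (\<lambda>v. f v * g v)) (\<lambda>v. pd k f v * g v + f v * pd k g v)"
    using mult.hyps by (intro pd_mult smooth_algebra_coord_differentiable)
  ultimately have "agree (pd k (\<lambda>v. f v * g v)) (\<lambda>v. f' v * g v + f v * g' v)"
    by (simp add: agree_def)
  moreover have "(\<lambda>v. f' v * g v + f v * g' v) \<in> smooth_algebra"
    using mult.hyps \<open>f' \<in> smooth_algebra\<close> \<open>g' \<in> smooth_algebra\<close>
    by (intro smooth_algebra.add smooth_algebra.mult)
  ultimately show ?case by blast
qed

lemma smooth_algebra_smooth: "f \<in> smooth_algebra \<Longrightarrow> smooth_on_jet U f"
  by (rule smooth_on_jet_coinduct[OF smooth_algebra_regular smooth_algebra_pd])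

lemma smooth_on_jet_const: "smooth_on_jet U (\<lambda>v. c)"
  by (rule smooth_algebra_smooth, rule smooth_algebra.const)

lemma smooth_on_jet_coord: "smooth_on_jet U (\<lambda>v. v i)"
  by (rule smooth_algebra_smooth, rule smooth_algebra.coord)

lemma smooth_on_jet_add:
  "smooth_on_jet U f \<Longrightarrow> smooth_on_jet U g \<Longrightarrow> smooth_on_jet U (\<lambda>v. f v + g v)"
  by (rule smooth_algebra_smooth, rule smooth_algebra.add; rule smooth_algebra.smooth)

lemma smooth_on_jet_mult:
  "smooth_on_jet U f \<Longrightarrow> smooth_on_jet U g \<Longrightarrow> smooth_on_jet U (\<lambda>v. f v * g v)"
  by (rule smooth_algebra_smooth, rule smooth_algebra.mult; rule smooth_algebra.smooth)

subsection \<open>Symmetry of second partial derivatives\<close>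

lemma second_difference_mean_value:
  assumes "smooth_on_jet U f" "i \<noteq> k" "0 < h"
    and square: "\<And>s t. a \<le> s \<Longrightarrow> s \<le> a + h \<Longrightarrow> b \<le> t \<Longrightarrow> t \<le> b + h \<Longrightarrow> u(i := s, k := t) \<in> U"
  obtains s t where "a < s" "s < a + h" "b < t" "t < b + h"
    "f (u(i := a + h, k := b + h)) - f (u(i := a + h, k := b)) - f (u(i := a, k := b + h))
       + f (u(i := a, k := b)) = h * h * pd k (pd i f) (u(i := s, k := t))"
proof -
  have df: "coord_differentiable f" and dfi: "coord_differentiable (pd i f)"
    using assms(1) by (auto intro: smooth_on_jet_coord_differentiable smooth_on_jet_pd)
  have twist: "u(i := s, k := t) = u(k := t, i := s)" for s t
    using assms(2) by (simp add: fun_upd_twist)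
  have "a < a + h" "b < b + h" using \<open>0 < h\<close> by simp_all
  have dA: "((\<lambda>s. f (u(i := s, k := b + h)) - f (u(i := s, k := b))) has_field_derivative
      pd i f (u(i := s, k := b + h)) - pd i f (u(i := s, k := b))) (at s)"
    if "a \<le> s" "s \<le> a + h" for s
    unfolding twist using that assms(3) square[unfolded twist]
    by (intro DERIV_diff has_field_derivative_coord[OF df]) auto
  obtain s where s: "a < s" "s < a + h" and s_eq:
    "(f (u(i := a + h, k := b + h)) - f (u(i := a + h, k := b)))
       - (f (u(i := a, k := b + h)) - f (u(i := a, k := b)))
     = (a + h - a) * (pd i f (u(i := s, k := b + h)) - pd i f (u(i := s, k := b)))"
    using MVT2[OF \<open>a < a + h\<close> dA] by blast
  have dB: "((\<lambda>t. pd i f (u(i := s, k := t))) has_field_derivative pd k (pd i f) (u(i := s, k := t))) (at t)"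
    if "b \<le> t" "t \<le> b + h" for t
    using has_field_derivative_coord[OF dfi, of "u(i := s)" k t] that s square by simp
  obtain t where t: "b < t" "t < b + h" and t_eq:
    "pd i f (u(i := s, k := b + h)) - pd i f (u(i := s, k := b))
     = (b + h - b) * pd k (pd i f) (u(i := s, k := t))"
    using MVT2[OF \<open>b < b + h\<close> dB] by blast
  show thesis
    by (rule that[OF s t]) (use s_eq t_eq in \<open>simp add: algebra_simps\<close>)
qed

lemma pd_pd_le:
  assumes f: "smooth_on_jet U f" and u: "u \<in> U" and "i \<noteq> k"
  shows "pd i (pd k f) u \<le> pd k (pd i f) u"
proof (rule ccontr)
  define G H where "G = pd k (pd i f)" and "H = pd i (pd k f)"
  assume "\<not> ?thesis"
  then have "G u < H u" by (simp add: G_def H_def)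
  define c where "c = (G u + H u) / 2"
  define V where "V = (U \<inter> G -` {..<c}) \<inter> (U \<inter> H -` {c<..})"
  have "continuous_on U G" "continuous_on U H"
    unfolding G_def H_def using f by (auto intro: smooth_on_jet_continuous smooth_on_jet_pd)
  then have "open V"
    unfolding V_def by (intro open_Int continuous_open_preimage open_U open_lessThan open_greaterThan)
  moreover have "u \<in> V" using u \<open>G u < H u\<close> by (simp add: V_def c_def)
  ultimately obtain h where h: "0 < h" and square:
    "\<And>s t. u i \<le> s \<Longrightarrow> s \<le> u i + h \<Longrightarrow> u k \<le> t \<Longrightarrow> t \<le> u k + h \<Longrightarrow> u(i := s, k := t) \<in> V"
    using eventually_nhds_square[OF eventually_fun_upd2_in_open] by (metis fst_conv snd_conv)
  have twist: "u(k := t, i := s) = u(i := s, k := t)" for s t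
    using \<open>i \<noteq> k\<close> by (simp add: fun_upd_twist)
  text \<open>The second difference over the square is symmetric in i and k, but the mean value
    theorem, applied in the two orders, writes it as h * h * G and as h * h * H at points of
    the square, where G < c < H.\<close>
  obtain s1 t1 where st1: "u i < s1" "s1 < u i + h" "u k < t1" "t1 < u k + h"
    and first: "f (u(i := u i + h, k := u k + h)) - f (u(i := u i + h, k := u k))
      - f (u(i := u i, k := u k + h)) + f (u(i := u i, k := u k)) = h * h * G (u(i := s1, k := t1))"
    using second_difference_mean_value[OF f \<open>i \<noteq> k\<close> h, of "u i" "u k" u] square
    unfolding G_def V_def by blast
  obtain t2 s2 where st2: "u k < t2" "t2 < u k + h" "u i < s2" "s2 < u i + h"
    and second: "f (u(i := u i + h, k := u k + h)) - f (u(i := u i, k := u k + h))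
      - f (u(i := u i + h, k := u k)) + f (u(i := u i, k := u k)) = h * h * H (u(i := s2, k := t2))"
    using second_difference_mean_value[OF f \<open>i \<noteq> k\<close>[symmetric] h, of "u k" "u i" u] square
    unfolding H_def V_def twist by blast
  have "G (u(i := s1, k := t1)) < c" "c < H (u(i := s2, k := t2))"
    using square[of s1 t1] square[of s2 t2] st1 st2 by (auto simp: V_def)
  then have "h * h * G (u(i := s1, k := t1)) < h * h * H (u(i := s2, k := t2))"
    using h by (simp add: mult_strict_left_mono)
  with first second show False by simp
qed

lemma pd_commute: "smooth_on_jet U f \<Longrightarrow> u \<in> U \<Longrightarrow> pd i (pd k f) u = pd k (pd i f) u"
  by (cases "i = k") (auto intro: antisym pd_pd_le)

end

locale cylinder_jet_domain = open_jet_domain +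
  fixes m :: nat
  assumes cylinder: "\<And>u v. (\<forall>k\<le>m. u k = v k) \<Longrightarrow> u \<in> U \<longleftrightarrow> v \<in> U"
begin

lemma fun_upd_in_U: "u \<in> U \<Longrightarrow> m < k \<Longrightarrow> u(k := t) \<in> U"
  using cylinder[of "u(k := t)" u] by auto

text \<open>The bound N \<ge> m is built in so that the coordinates beyond N can be varied within U.\<close>

definition order_le :: "nat \<Rightarrow> jetfun \<Rightarrow> bool" where
  "order_le N f \<longleftrightarrow> m \<le> N \<and> (\<forall>u\<in>U. \<forall>v\<in>U. (\<forall>k\<le>N. u k = v k) \<longrightarrow> f u = f v)"

lemma order_leI:
  assumes "m \<le> N" "\<And>u v. u \<in> U \<Longrightarrow> v \<in> U \<Longrightarrow> (\<forall>k\<le>N. u k = v k) \<Longrightarrow> f u = f v"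
  shows "order_le N f"
  unfolding order_le_def using assms by blast

lemma order_leD:
  "order_le N f \<Longrightarrow> u \<in> U \<Longrightarrow> v \<in> U \<Longrightarrow> (\<forall>k\<le>N. u k = v k) \<Longrightarrow> f u = f v"
  unfolding order_le_def by blast

lemma order_le_ge_m: "order_le N f \<Longrightarrow> m \<le> N"
  by (simp add: order_le_def)

lemma order_le_mono:
  assumes "order_le N f" "N \<le> N'"
  shows "order_le N' f"
proof (rule order_leI)
  show "m \<le> N'" using order_le_ge_m[OF assms(1)] assms(2) by simp
  fix u v assume "u \<in> U" "v \<in> U" "\<forall>k\<le>N'. u k = v k"
  then show "f u = f v" using assms(2) by (intro order_leD[OF assms(1)]) simp_all
qed

lemma order_le_cong:
  assumes "agree f g" "order_le N f"
  shows "order_le N g"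
proof (rule order_leI)
  show "m \<le> N" by (rule order_le_ge_m[OF assms(2)])
  fix u v assume "u \<in> U" "v \<in> U" "\<forall>k\<le>N. u k = v k"
  then have "f u = f v" by (rule order_leD[OF assms(2)])
  then show "g u = g v" using agreeD[OF assms(1)] \<open>u \<in> U\<close> \<open>v \<in> U\<close> by simp
qed

lemma order_le_binop:
  assumes "order_le N f" "order_le N g"
  shows "order_le N (\<lambda>v. h (f v) (g v))"
proof (rule order_leI)
  show "m \<le> N" by (rule order_le_ge_m[OF assms(1)])
  fix u v assume uv: "u \<in> U" "v \<in> U" "\<forall>k\<le>N. u k = v k"
  have "f u = f v" using uv by (rule order_leD[OF assms(1)])
  moreover have "g u = g v" using uv by (rule order_leD[OF assms(2)])
  ultimately show "h (f u) (g u) = h (f v) (g v)" by simp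
qed

lemma pd_beyond_order:
  assumes f: "order_le N f" and u: "u \<in> U" and "N < k"
  shows "pd k f u = 0"
proof -
  have "m < k" using f \<open>N < k\<close> by (simp add: order_le_def)
  have "f (u(k := t)) = f u" for t
  proof -
    have "u(k := t) \<in> U" by (rule fun_upd_in_U[OF u \<open>m < k\<close>])
    moreover have "\<forall>i\<le>N. (u(k := t)) i = u i" using \<open>N < k\<close> by simp
    ultimately show ?thesis using f u unfolding order_le_def by blast
  qed
  then show ?thesis unfolding pd_def by simp
qed

lemma pd_beyond_order_agree: "order_le N f \<Longrightarrow> N < k \<Longrightarrow> agree (pd k f) (\<lambda>v. 0)"
  by (simp add: agree_def pd_beyond_order)

lemma order_le_pd:
  assumes f: "order_le N f"
  shows "order_le N (pd k f)"
proof (rule order_leI)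
  show "m \<le> N" by (rule order_le_ge_m[OF f])
  fix u v assume u: "u \<in> U" and v: "v \<in> U" and uv: "\<forall>k\<le>N. u k = v k"
  show "pd k f u = pd k f v"
  proof (cases "N < k")
    case True
    then show ?thesis using pd_beyond_order[OF f] u v by simp
  next
    case False
    have "eventually (\<lambda>t. f (u(k := t)) = f (v(k := t))) (nhds (u k))"
    proof (rule eventually_mono[OF eventually_fun_upd_in_U[OF u]])
      fix t assume ut: "u(k := t) \<in> U"
      have agree: "\<forall>i\<le>N. (u(k := t)) i = (v(k := t)) i" using uv by simp
      moreover have "v(k := t) \<in> U"
        using cylinder[of "u(k := t)" "v(k := t)"] ut agree order_le_ge_m[OF f] by simp
      ultimately show "f (u(k := t)) = f (v(k := t))" using ut by (intro order_leD[OF f])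
    qed
    moreover have "u k = v k" using uv False by simp
    ultimately show ?thesis unfolding pd_def by (rule deriv_cong_ev)
  qed
qed

definition differential_function :: "jetfun \<Rightarrow> bool" where
  "differential_function f \<longleftrightarrow> smooth_on_jet U f \<and> (\<exists>N. order_le N f)"

lemma differential_function_cong: "agree f g \<Longrightarrow> differential_function f \<Longrightarrow> differential_function g"
  unfolding differential_function_def using smooth_on_jet_cong order_le_cong by blast

lemma differential_function_coord_differentiable:
  "differential_function f \<Longrightarrow> coord_differentiable f"
  by (simp add: differential_function_def smooth_on_jet_coord_differentiable)

lemma common_order:
  assumes "differential_function f" "differential_function g"
  obtains N where "order_le N f" "order_le N g"
proof -
  obtain N1 N2 where "order_le N1 f" "order_le N2 g"
    using assms by (auto simp: differential_function_def)
  then show thesis by (intro that[of "max N1 N2"]) (auto elim: order_le_mono)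
qed

lemma differential_function_pd: "differential_function f \<Longrightarrow> differential_function (pd k f)"
  unfolding differential_function_def using smooth_on_jet_pd order_le_pd by blast

lemma differential_function_const: "differential_function (\<lambda>v. c)"
  by (auto simp: differential_function_def order_le_def smooth_on_jet_const intro!: exI[of _ m])

lemma differential_function_coord: "differential_function (\<lambda>v. v i)"
  unfolding differential_function_def using smooth_on_jet_coord
  by (auto simp: order_le_def intro!: exI[of _ "max i m"])

lemma differential_function_add:
  assumes "differential_function f" "differential_function g"
  shows "differential_function (\<lambda>v. f v + g v)"
proof -
  obtain N where "order_le N f" "order_le N g" using common_order[OF assms] .
  then have "order_le N (\<lambda>v. f v + g v)" by (rule order_le_binop)
  then show ?thesis using assms smooth_on_jet_add unfolding differential_function_def by blast
qed

lemma differential_function_mult: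
  assumes "differential_function f" "differential_function g"
  shows "differential_function (\<lambda>v. f v * g v)"
proof -
  obtain N where "order_le N f" "order_le N g" using common_order[OF assms] .
  then have "order_le N (\<lambda>v. f v * g v)" by (rule order_le_binop)
  then show ?thesis using assms smooth_on_jet_mult unfolding differential_function_def by blast
qed

lemma differential_function_cmult: "differential_function f \<Longrightarrow> differential_function (\<lambda>v. c * f v)"
  by (rule differential_function_mult[OF differential_function_const])

lemma differential_function_diff:
  assumes "differential_function f" "differential_function g"
  shows "differential_function (\<lambda>v. f v - g v)"
  using differential_function_add[OF assms(1) differential_function_cmult[OF assms(2), of "-1"]]
  by simp

lemma differential_function_sum:
  "finite A \<Longrightarrow> (\<And>i. i \<in> A \<Longrightarrow> differential_function (F i)) \<Longrightarrow>
     differential_function (\<lambda>v. \<Sum>i\<in>A. F i v)"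
  by (induction A rule: finite_induct)
    (simp_all add: differential_function_const differential_function_add)

subsection \<open>The total derivative\<close>

lemma Dtot_finite:
  assumes "order_le N f" "u \<in> U" "N < K"
  shows "Dtot f u = (\<Sum>k<K. u (Suc k) * pd k f u)"
  unfolding Dtot_def
  by (rule suminf_finite) (use assms pd_beyond_order in auto)

lemma Dtot_cong:
  assumes "agree f g"
  shows "agree (Dtot f) (Dtot g)"
  unfolding agree_def Dtot_def using agreeD[OF pd_cong[OF assms]] by simp

lemma Dtot_funpow_cong: "agree f g \<Longrightarrow> agree ((Dtot ^^ j) f) ((Dtot ^^ j) g)"
  by (induction j) (auto intro: Dtot_cong)

lemma Dtot_funpow_zero: "(Dtot ^^ j) (\<lambda>v. 0) = (\<lambda>v. 0)"
  by (induction j) (simp_all add: Dtot_def)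

lemma Dtot_funpow_vanishing: "agree f (\<lambda>v. 0) \<Longrightarrow> agree ((Dtot ^^ j) f) (\<lambda>v. 0)"
  using Dtot_funpow_cong[of f "\<lambda>v. 0" j] by (simp add: Dtot_funpow_zero)

lemma Dtot_funpow_pd_beyond_order:
  "order_le N f \<Longrightarrow> N < k \<Longrightarrow> u \<in> U \<Longrightarrow> (Dtot ^^ j) (pd k f) u = 0"
  using agreeD[OF Dtot_funpow_vanishing[OF pd_beyond_order_agree]] by blast

lemma Dtot_coord: "Dtot (\<lambda>v. v i) = (\<lambda>v. v (Suc i))"
proof
  fix u :: "nat \<Rightarrow> real"
  have "Dtot (\<lambda>v. v i) u = (\<Sum>k\<in>{i}. u (Suc k) * (if k = i then 1 else 0))"
    unfolding Dtot_def pd_coord by (rule suminf_finite) auto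
  then show "Dtot (\<lambda>v. v i) u = u (Suc i)" by simp
qed

lemma Dtot_funpow_coord: "(Dtot ^^ j) (\<lambda>v. v i) = (\<lambda>v. v (i + j))"
  by (induction j) (simp_all add: Dtot_coord)

lemma order_le_Dtot:
  assumes f: "order_le N f"
  shows "order_le (Suc N) (Dtot f)"
proof (rule order_leI)
  show "m \<le> Suc N" using order_le_ge_m[OF f] by simp
  fix u v assume u: "u \<in> U" and v: "v \<in> U" and uv: "\<forall>k\<le>Suc N. u k = v k"
  have "pd k f u = pd k f v" for k
    using u v by (rule order_leD[OF order_le_pd[OF f]]) (use uv in simp)
  then show "Dtot f u = Dtot f v"
    using Dtot_finite[OF f u lessI] Dtot_finite[OF f v lessI] uv by simp
qed

lemma differential_function_Dtot:
  assumes f: "differential_function f"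
  shows "differential_function (Dtot f)"
proof -
  obtain N where N: "order_le N f" using f by (auto simp: differential_function_def)
  have "differential_function (\<lambda>v. \<Sum>k<Suc N. v (Suc k) * pd k f v)"
    by (intro differential_function_sum differential_function_mult differential_function_coord
        differential_function_pd f) simp
  moreover have "agree (\<lambda>v. \<Sum>k<Suc N. v (Suc k) * pd k f v) (Dtot f)"
    using Dtot_finite[OF N _ lessI] by (simp add: agree_def del: sum.lessThan_Suc)
  ultimately show ?thesis by (rule differential_function_cong[rotated])
qed

lemma differential_function_Dtot_funpow:
  "differential_function f \<Longrightarrow> differential_function ((Dtot ^^ j) f)"
  by (induction j) (simp_all add: differential_function_Dtot)

lemma Dtot_add:
  assumes "differential_function f" "differential_function g"
  shows "agree (Dtot (\<lambda>v. f v + g v)) (\<lambda>v. Dtot f v + Dtot g v)"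
  unfolding agree_def
proof
  fix u assume u: "u \<in> U"
  obtain N where f: "order_le N f" and g: "order_le N g" using common_order[OF assms] .
  have "Dtot (\<lambda>v. f v + g v) u = (\<Sum>k<Suc N. u (Suc k) * pd k (\<lambda>v. f v + g v) u)"
    using Dtot_finite[OF order_le_binop[OF f g] u lessI] .
  also have "\<dots> = (\<Sum>k<Suc N. u (Suc k) * pd k f u) + (\<Sum>k<Suc N. u (Suc k) * pd k g u)"
    using agreeD[OF pd_add[OF assms[THEN differential_function_coord_differentiable]] u]
    by (simp add: distrib_left sum.distrib)
  also have "\<dots> = Dtot f u + Dtot g u"
    using Dtot_finite[OF f u lessI] Dtot_finite[OF g u lessI] by simp
  finally show "Dtot (\<lambda>v. f v + g v) u = Dtot f u + Dtot g u" .
qed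

lemma Dtot_mult:
  assumes "differential_function f" "differential_function g"
  shows "agree (Dtot (\<lambda>v. f v * g v)) (\<lambda>v. Dtot f v * g v + f v * Dtot g v)"
  unfolding agree_def
proof
  fix u assume u: "u \<in> U"
  obtain N where f: "order_le N f" and g: "order_le N g" using common_order[OF assms] .
  have "Dtot (\<lambda>v. f v * g v) u = (\<Sum>k<Suc N. u (Suc k) * pd k (\<lambda>v. f v * g v) u)"
    using Dtot_finite[OF order_le_binop[OF f g] u lessI] .
  also have "\<dots> = (\<Sum>k<Suc N. u (Suc k) * pd k f u) * g u + f u * (\<Sum>k<Suc N. u (Suc k) * pd k g u)"
    using agreeD[OF pd_mult[OF assms[THEN differential_function_coord_differentiable]] u]
    by (simp add: algebra_simps sum.distrib sum_distrib_left sum_distrib_right)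
  also have "\<dots> = Dtot f u * g u + f u * Dtot g u"
    using Dtot_finite[OF f u lessI] Dtot_finite[OF g u lessI] by simp
  finally show "Dtot (\<lambda>v. f v * g v) u = Dtot f u * g u + f u * Dtot g u" .
qed

lemma Dtot_cmult: "differential_function f \<Longrightarrow> agree (Dtot (\<lambda>v. c * f v)) (\<lambda>v. c * Dtot f v)"
  using Dtot_mult[OF differential_function_const, of f c] by (simp add: Dtot_def agree_def)

lemma Dtot_diff:
  assumes "differential_function f" "differential_function g"
  shows "agree (Dtot (\<lambda>v. f v - g v)) (\<lambda>v. Dtot f v - Dtot g v)"
  using Dtot_add[OF assms(1) differential_function_cmult[OF assms(2)], of "-1"]
    Dtot_cmult[OF assms(2), of "-1"]
  by (simp add: agree_def)

lemma Dtot_funpow_add: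
  assumes "differential_function f" "differential_function g"
  shows "agree ((Dtot ^^ j) (\<lambda>v. f v + g v)) (\<lambda>v. (Dtot ^^ j) f v + (Dtot ^^ j) g v)"
proof (induction j)
  case 0
  then show ?case by simp
next
  case (Suc j)
  have "agree ((Dtot ^^ Suc j) (\<lambda>v. f v + g v)) (Dtot (\<lambda>v. (Dtot ^^ j) f v + (Dtot ^^ j) g v))"
    using Dtot_cong[OF Suc.IH] by simp
  also have "agree \<dots> (\<lambda>v. (Dtot ^^ Suc j) f v + (Dtot ^^ Suc j) g v)"
    using Dtot_add[OF assms[THEN differential_function_Dtot_funpow]] by simp
  finally show ?case .
qed

lemma pd_Dtot:
  assumes f: "differential_function f"
  shows "agree (pd k (Dtot f)) (\<lambda>v. Dtot (pd k f) v + (if k = 0 then 0 else pd (k - 1) f v))"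
proof -
  obtain N where N: "order_le N f" using f by (auto simp: differential_function_def)
  have df: "coord_differentiable (pd i f)" for i
    by (intro differential_function_coord_differentiable differential_function_pd f)
  have "agree (pd k (Dtot f)) (pd k (\<lambda>v. \<Sum>i<Suc N. v (Suc i) * pd i f v))"
    by (rule pd_cong) (use Dtot_finite[OF N _ lessI] in \<open>simp add: agree_def del: sum.lessThan_Suc\<close>)
  also have "agree \<dots> (\<lambda>v. \<Sum>i<Suc N. pd k (\<lambda>v. v (Suc i) * pd i f v) v)"
    by (intro pd_sum coord_differentiable_mult coord_differentiable_coord df)
  also have "agree \<dots> (\<lambda>v. Dtot (pd k f) v + (if k = 0 then 0 else pd (k - 1) f v))"
    unfolding agree_def
  proof
    fix u assume u: "u \<in> U"
    have "pd k (\<lambda>v. v (Suc i) * pd i f v) u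
        = (if k = Suc i then pd i f u else 0) + u (Suc i) * pd i (pd k f) u" for i
      using agreeD[OF pd_mult[OF coord_differentiable_coord df] u]
        pd_commute[OF differential_function_def[THEN iffD1, OF f, THEN conjunct1] u, of k i]
      by (simp add: pd_coord)
    then have "(\<Sum>i<Suc N. pd k (\<lambda>v. v (Suc i) * pd i f v) u)
        = (\<Sum>i<Suc N. if k = Suc i then pd i f u else 0) + (\<Sum>i<Suc N. u (Suc i) * pd i (pd k f) u)"
      by (simp add: sum.distrib)
    also have "(\<Sum>i<Suc N. if k = Suc i then pd i f u else 0) = (if k = 0 then 0 else pd (k - 1) f u)"
      using pd_beyond_order[OF N u, of "k - 1"] by (cases k) auto
    also have "(\<Sum>i<Suc N. u (Suc i) * pd i (pd k f) u) = Dtot (pd k f) u"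
      using Dtot_finite[OF order_le_pd[OF N] u lessI] by simp
    finally show "(\<Sum>i<Suc N. pd k (\<lambda>v. v (Suc i) * pd i f v) u)
        = Dtot (pd k f) u + (if k = 0 then 0 else pd (k - 1) f u)" by simp
  qed
  finally show ?thesis .
qed


definition euler_lagrange :: "nat \<Rightarrow> jetfun \<Rightarrow> jetfun" where
  "euler_lagrange K f = (\<lambda>v. \<Sum>j<K. (-1) ^ j * (Dtot ^^ j) (pd j f) v)"

lemma differential_function_euler_lagrange:
  "differential_function f \<Longrightarrow> differential_function (euler_lagrange K f)"
  unfolding euler_lagrange_def
  by (intro differential_function_sum differential_function_cmult differential_function_Dtot_funpow
      differential_function_pd) simp_all

lemma euler_lagrange_cong:
  assumes "agree f g"
  shows "agree (euler_lagrange K f) (euler_lagrange K g)"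
  unfolding agree_def euler_lagrange_def
  using agreeD[OF Dtot_funpow_cong[OF pd_cong[OF assms]]] by simp

lemma euler_lagrange_beyond_order:
  assumes "order_le N f" "N < K" "u \<in> U"
  shows "euler_lagrange K f u = euler_lagrange (Suc N) f u"
  unfolding euler_lagrange_def
  by (rule sum.mono_neutral_right) (use assms Dtot_funpow_pd_beyond_order in auto)

lemma euler_lagrange_add:
  assumes "differential_function f" "differential_function g"
  shows "agree (euler_lagrange K (\<lambda>v. f v + g v))
           (\<lambda>v. euler_lagrange K f v + euler_lagrange K g v)"
  unfolding agree_def
proof
  fix u assume u: "u \<in> U"
  have "(Dtot ^^ j) (pd j (\<lambda>v. f v + g v)) u = (Dtot ^^ j) (pd j f) u + (Dtot ^^ j) (pd j g) u" for j
    using agreeD[OF Dtot_funpow_cong[OF pd_add[OF assms[THEN differential_function_coord_differentiable]]] u]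
      agreeD[OF Dtot_funpow_add[OF assms[THEN differential_function_pd]] u]
    by simp
  then show "euler_lagrange K (\<lambda>v. f v + g v) u = euler_lagrange K f u + euler_lagrange K g u"
    by (simp add: euler_lagrange_def distrib_left sum.distrib)
qed

lemma alternating_sum_telescope:
  "(\<Sum>j<Suc n. (-1::real) ^ j * (x j + (if j = 0 then 0 else x (j - 1)))) = (-1) ^ n * x n"
  by (induction n) (auto simp: algebra_simps)

lemma Dtot_funpow_pd_Dtot:
  assumes R: "differential_function R" and u: "u \<in> U"
  shows "(Dtot ^^ j) (pd j (Dtot R)) u
    = (Dtot ^^ Suc j) (pd j R) u + (if j = 0 then 0 else (Dtot ^^ j) (pd (j - 1) R) u)"
proof (cases j)
  case 0
  then show ?thesis using agreeD[OF pd_Dtot[OF R] u] by simp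
next
  case (Suc i)
  have "(Dtot ^^ j) (pd j (Dtot R)) u
      = (Dtot ^^ j) (\<lambda>v. Dtot (pd j R) v + (if j = 0 then 0 else pd (j - 1) R v)) u"
    by (rule agreeD[OF Dtot_funpow_cong[OF pd_Dtot[OF R]] u])
  also have "\<dots> = (Dtot ^^ j) (\<lambda>v. Dtot (pd j R) v + pd i R v) u"
    using Suc by (simp del: funpow.simps)
  also have "\<dots> = (Dtot ^^ j) (Dtot (pd j R)) u + (Dtot ^^ j) (pd i R) u"
    by (rule agreeD[OF Dtot_funpow_add u])
      (intro differential_function_Dtot differential_function_pd R)+
  also have "(Dtot ^^ j) (Dtot (pd j R)) = (Dtot ^^ Suc j) (pd j R)"
    by (simp only: funpow_Suc_right o_apply)
  finally show ?thesis using Suc by simp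
qed

lemma euler_lagrange_Dtot:
  assumes R: "differential_function R" "order_le N R" and "Suc N < K"
  shows "agree (euler_lagrange K (Dtot R)) (\<lambda>v. 0)"
  unfolding agree_def
proof
  fix u assume u: "u \<in> U"
  define x where "x j = (Dtot ^^ Suc j) (pd j R) u" for j
  have "euler_lagrange K (Dtot R) u = euler_lagrange (Suc (Suc N)) (Dtot R) u"
    by (rule euler_lagrange_beyond_order[OF order_le_Dtot[OF R(2)] \<open>Suc N < K\<close> u])
  also have "\<dots> = (\<Sum>j<Suc (Suc N). (-1) ^ j * (x j + (if j = 0 then 0 else x (j - 1))))"
    unfolding euler_lagrange_def x_def
    by (rule sum.cong[OF refl]) (simp add: Dtot_funpow_pd_Dtot[OF R(1) u])
  also have "\<dots> = (-1) ^ Suc N * x (Suc N)"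
    by (rule alternating_sum_telescope)
  also have "x (Suc N) = 0"
    unfolding x_def by (rule Dtot_funpow_pd_beyond_order[OF R(2) _ u]) simp
  finally show "euler_lagrange K (Dtot R) u = 0" by simp
qed

lemma Eop_finite:
  assumes "order_le N f" "N < K" "u \<in> U"
  shows "Eop f u = (\<Sum>j<K. u j * pd j f u)"
  unfolding Eop_def by (rule suminf_finite) (use assms pd_beyond_order in auto)

lemma Lambda_op_finite:
  assumes "order_le N f" "N < K" "u \<in> U"
  shows "Lambda_op f u = - euler_lagrange K f u"
proof -
  have "Lambda_op f u = (\<Sum>j<K. (-1) ^ (j + 1) * (Dtot ^^ j) (pd j f) u)"
    unfolding Lambda_op_def
    by (rule suminf_finite) (use assms Dtot_funpow_pd_beyond_order in auto)
  then show ?thesis by (simp add: euler_lagrange_def sum_negf[symmetric])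
qed

lemma Lop_finite:
  assumes f: "order_le N f" and "N < K" and u: "u \<in> U"
  shows "Lop f u = (\<Sum>j<K. (-1) ^ j * (Dtot ^^ j) (\<lambda>v. v 0 * pd j f v) u)"
  unfolding Lop_def
proof (rule suminf_finite)
  fix j assume "j \<notin> {..<K}"
  then have "agree (\<lambda>v. v 0 * pd j f v) (\<lambda>v. 0)"
    using pd_beyond_order[OF f] \<open>N < K\<close> by (simp add: agree_def)
  then show "(-1) ^ j * (Dtot ^^ j) (\<lambda>v. v 0 * pd j f v) u = 0"
    using agreeD[OF Dtot_funpow_vanishing u] by simp
qed simp

lemma euler_lagrange_coord0_mult:
  assumes P: "differential_function P" "order_le N P" and "N < K"
  shows "agree (euler_lagrange K (\<lambda>v. v 0 * P v)) (\<lambda>v. P v + Lop P v)"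
  unfolding agree_def
proof
  fix u assume u: "u \<in> U"
  have pd_u0P: "agree (pd j (\<lambda>v. v 0 * P v)) (\<lambda>v. (if j = 0 then P v else 0) + v 0 * pd j P v)" for j
    using pd_mult[OF coord_differentiable_coord differential_function_coord_differentiable[OF P(1)],
        of j 0]
    by (simp add: pd_coord agree_def)
  have "(-1) ^ j * (Dtot ^^ j) (pd j (\<lambda>v. v 0 * P v)) u
      = (if j = 0 then P u else 0) + (-1) ^ j * (Dtot ^^ j) (\<lambda>v. v 0 * pd j P v) u" for j
  proof (cases j)
    case 0
    then show ?thesis using agreeD[OF pd_u0P u] by simp
  next
    case (Suc i)
    then have "agree (pd j (\<lambda>v. v 0 * P v)) (\<lambda>v. v 0 * pd j P v)" using pd_u0P[of j] by simp
    then have "(Dtot ^^ j) (pd j (\<lambda>v. v 0 * P v)) u = (Dtot ^^ j) (\<lambda>v. v 0 * pd j P v) u"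
      by (rule agreeD[OF Dtot_funpow_cong u])
    then show ?thesis using Suc by (simp del: funpow.simps)
  qed
  then have "euler_lagrange K (\<lambda>v. v 0 * P v) u
      = (\<Sum>j<K. if j = 0 then P u else 0) + (\<Sum>j<K. (-1) ^ j * (Dtot ^^ j) (\<lambda>v. v 0 * pd j P v) u)"
    by (simp add: euler_lagrange_def sum.distrib del: sum.delta)
  then show "euler_lagrange K (\<lambda>v. v 0 * P v) u = P u + Lop P u"
    using Lop_finite[OF P(2) \<open>N < K\<close> u] \<open>N < K\<close> by simp
qed

subsection \<open>Integration by parts\<close>

definition is_total_derivative :: "jetfun \<Rightarrow> bool" where
  "is_total_derivative f \<longleftrightarrow> (\<exists>R. differential_function R \<and> agree f (Dtot R))"

lemma is_total_derivativeI:
  "differential_function R \<Longrightarrow> agree f (Dtot R) \<Longrightarrow> is_total_derivative f"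
  unfolding is_total_derivative_def by blast

lemma is_total_derivative_cong: "is_total_derivative f \<Longrightarrow> agree f g \<Longrightarrow> is_total_derivative g"
  unfolding is_total_derivative_def by (blast intro: agree_trans agree_sym)

lemma is_total_derivative_zero: "is_total_derivative (\<lambda>v. 0)"
  by (rule is_total_derivativeI[OF differential_function_const]) (simp add: agree_def Dtot_def)

lemma is_total_derivative_sum:
  "finite A \<Longrightarrow> (\<And>j. j \<in> A \<Longrightarrow> is_total_derivative (F j)) \<Longrightarrow>
     is_total_derivative (\<lambda>v. \<Sum>j\<in>A. F j v)"
proof (induction A rule: finite_induct)
  case empty
  then show ?case by (simp add: is_total_derivative_zero)
next
  case (insert j A)
  then obtain R T where R: "differential_function R" "agree (\<lambda>v. \<Sum>j\<in>A. F j v) (Dtot R)"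
    and T: "differential_function T" "agree (F j) (Dtot T)"
    unfolding is_total_derivative_def by blast
  have "agree (\<lambda>v. \<Sum>j\<in>insert j A. F j v) (Dtot (\<lambda>v. T v + R v))"
    using insert.hyps agreeD[OF R(2)] agreeD[OF T(2)] agreeD[OF Dtot_add[OF T(1) R(1)]]
    by (simp add: agree_def)
  then show ?case by (rule is_total_derivativeI[OF differential_function_add[OF T(1) R(1)]])
qed

lemma integration_by_parts:
  assumes a: "differential_function a" and b: "differential_function b"
  shows "is_total_derivative (\<lambda>v. (Dtot ^^ j) a v * b v - (-1) ^ j * a v * (Dtot ^^ j) b v)"
  using b
proof (induction j arbitrary: b)
  case 0
  then show ?case by (simp add: is_total_derivative_zero)
next
  case (Suc j)
  obtain T where T: "differential_function T"
    "agree (\<lambda>v. (Dtot ^^ j) a v * Dtot b v - (-1) ^ j * a v * (Dtot ^^ j) (Dtot b) v) (Dtot T)"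
    using Suc.IH[OF differential_function_Dtot[OF Suc.prems]]
    unfolding is_total_derivative_def by blast
  have aj: "differential_function ((Dtot ^^ j) a)"
    by (rule differential_function_Dtot_funpow[OF a])
  have ajb: "differential_function (\<lambda>v. (Dtot ^^ j) a v * b v)"
    by (rule differential_function_mult[OF aj Suc.prems])
  have "agree (\<lambda>v. (Dtot ^^ Suc j) a v * b v - (-1) ^ Suc j * a v * (Dtot ^^ Suc j) b v)
      (Dtot (\<lambda>v. (Dtot ^^ j) a v * b v - T v))"
    unfolding agree_def
  proof
    fix u assume u: "u \<in> U"
    have "(Dtot ^^ j) (Dtot b) = (Dtot ^^ Suc j) b"
      by (simp only: funpow_Suc_right o_apply)
    then show "(Dtot ^^ Suc j) a u * b u - (-1) ^ Suc j * a u * (Dtot ^^ Suc j) b u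
        = Dtot (\<lambda>v. (Dtot ^^ j) a v * b v - T v) u"
      using agreeD[OF Dtot_diff[OF ajb T(1)] u] agreeD[OF Dtot_mult[OF aj Suc.prems] u]
        agreeD[OF T(2) u]
      by simp
  qed
  then show ?case by (rule is_total_derivativeI[OF differential_function_diff[OF ajb T(1)]])
qed

lemma homogeneous_add_coord0_mult_Lambda_op:
  assumes \<phi>: "differential_function \<phi>" "order_le m \<phi>"
    and Euler: "\<And>u. u \<in> U \<Longrightarrow> Eop \<phi> u = \<phi> u"
  shows "is_total_derivative (\<lambda>v. \<phi> v + v 0 * Lambda_op \<phi> v)"
proof -
  define F where "F j = (\<lambda>v. (Dtot ^^ j) (\<lambda>v. v 0) v * pd j \<phi> v
      - (-1) ^ j * v 0 * (Dtot ^^ j) (pd j \<phi>) v)" for j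
  have "is_total_derivative (\<lambda>v. \<Sum>j<Suc m. F j v)"
    unfolding F_def
    by (intro is_total_derivative_sum integration_by_parts differential_function_coord
        differential_function_pd \<phi>(1)) simp
  moreover have "agree (\<lambda>v. \<Sum>j<Suc m. F j v) (\<lambda>v. \<phi> v + v 0 * Lambda_op \<phi> v)"
    unfolding agree_def
  proof
    fix u assume u: "u \<in> U"
    have "(\<Sum>j<Suc m. F j u) = (\<Sum>j<Suc m. u j * pd j \<phi> u) - u 0 * euler_lagrange (Suc m) \<phi> u"
      by (simp add: F_def euler_lagrange_def Dtot_funpow_coord sum_subtractf sum_distrib_left
          algebra_simps del: sum.lessThan_Suc)
    also have "\<dots> = \<phi> u + u 0 * Lambda_op \<phi> u"
      using Euler[OF u] Eop_finite[OF \<phi>(2) lessI u] Lambda_op_finite[OF \<phi>(2) lessI u]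
      by (simp del: sum.lessThan_Suc)
    finally show "(\<Sum>j<Suc m. F j u) = \<phi> u + u 0 * Lambda_op \<phi> u" .
  qed
  ultimately show ?thesis by (rule is_total_derivative_cong)
qed

theorem Lop_Lambda_op_eq_0:
  assumes \<phi>: "differential_function \<phi>" "order_le m \<phi>"
    and Euler: "\<And>u. u \<in> U \<Longrightarrow> Eop \<phi> u = \<phi> u"
  shows "agree (Lop (Lambda_op \<phi>)) (\<lambda>v. 0)"
proof -
  define S where "S = Lambda_op \<phi>"
  have "agree (\<lambda>v. (-1) * euler_lagrange (Suc m) \<phi> v) S"
    using Lambda_op_finite[OF \<phi>(2) lessI] by (simp add: agree_def S_def)
  then have S: "differential_function S"
    by (rule differential_function_cong)
      (intro differential_function_cmult differential_function_euler_lagrange \<phi>(1))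
  obtain R where R: "differential_function R" "agree (\<lambda>v. \<phi> v + v 0 * S v) (Dtot R)"
    using homogeneous_add_coord0_mult_Lambda_op[OF \<phi> Euler]
    unfolding is_total_derivative_def S_def by blast
  obtain NS NR where NS: "order_le NS S" and NR: "order_le NR R"
    using S R(1) by (auto simp: differential_function_def)
  define N where "N = max m (max NS NR)"
  have N: "order_le N \<phi>" "order_le N S" "order_le N R"
    using order_le_mono[OF \<phi>(2), of N] order_le_mono[OF NS, of N] order_le_mono[OF NR, of N]
    by (simp_all add: N_def)
  define K where "K = Suc (Suc N)"
  have "agree (euler_lagrange K (\<lambda>v. \<phi> v + v 0 * S v))
      (\<lambda>v. euler_lagrange K \<phi> v + euler_lagrange K (\<lambda>v. v 0 * S v) v)"
    by (rule euler_lagrange_add[OF \<phi>(1) differential_function_mult[OF differential_function_coord S]])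
  also have "agree \<dots> (Lop S)"
    using Lambda_op_finite[OF N(1)] agreeD[OF euler_lagrange_coord0_mult[OF S N(2)]]
    by (simp add: agree_def S_def K_def)
  finally have "agree (euler_lagrange K (\<lambda>v. \<phi> v + v 0 * S v)) (Lop S)" .
  moreover have "agree (euler_lagrange K (\<lambda>v. \<phi> v + v 0 * S v)) (\<lambda>v. 0)"
    using euler_lagrange_cong[OF R(2)] euler_lagrange_Dtot[OF R(1) N(3)]
    by (simp add: agree_def K_def)
  ultimately show ?thesis unfolding S_def agree_def by simp
qed

end

theorem mainTheorem10:
  fixes m :: nat and U :: "(nat \<Rightarrow> real) set" and \<phi> :: jetfun
  assumes "open U"
    and "U \<subseteq> {u. u 0 > 0}"
    and "\<And>u v. (\<forall>k\<le>m. u k = v k) \<Longrightarrow> (u \<in> U \<longleftrightarrow> v \<in> U)"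
    and "\<And>u v. u \<in> U \<Longrightarrow> v \<in> U \<Longrightarrow> (\<forall>k\<le>m. u k = v k) \<Longrightarrow> \<phi> u = \<phi> v"
    and "smooth_on_jet U \<phi>"
    and "\<And>u. u \<in> U \<Longrightarrow> Eop \<phi> u = \<phi> u"
  shows "\<forall>u\<in>U. Lop (Lambda_op \<phi>) u = 0"
proof -
  interpret cylinder_jet_domain U m
    by unfold_locales (rule assms(1), rule assms(3))
  have "order_le m \<phi>"
    by (rule order_leI[OF le_refl assms(4)])
  then have "differential_function \<phi>"
    using assms(5) by (auto simp: differential_function_def)
  then show ?thesis
    using Lop_Lambda_op_eq_0[OF _ \<open>order_le m \<phi>\<close> assms(6)] by (simp add: agree_def)
qed

end
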